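(* Let $K$ be a finite field of characteristic $p$ and order $q$, let $s$ be a positive integer with $\gcd(s,q-1)=1$, let $k$ be a positive integer with $p\equiv1\pmod k$, let $\lambda$ be a primitive $k$th root of unity in $\mathbb{F}_p^\times$, and for $u\in K^\times$ let $\Omega_u=\sum_{i=0}^{k-1}W_{\lambda^iu}$. Then (i) $\sum_{u\in K^\times}\Omega_u^0=q-1$; (ii) $\sum_{u\in K^\times}\Omega_u=kq$; (iii) $\sum_{u\in K^\times}\Omega_u^2=kq^2$; (iv) if $k=2$, then $\sum_{u\in K^\times}\Omega_u^3=2q^2\big(V^{[1,1]}_1+3V^{[1,1]}_{-1}\big)$.
   Context: $\zeta=\exp(2\pi i/p)$, $\psi(x)=\zeta^{\mathrm{Tr}(x)}$ with $\mathrm{Tr}$ the absolute trace of $K$ to $\mathbb{F}_p$; $W_u=\sum_{x\in K}\psi(x^s-ux)$. Let $1/s$ denote the inverse of $s$ modulo $q-1$. For $a,b\in K$, $Q^{(1,1)}_{a,b}$ is the number of $(v_1,v_2)\in K^2$ with $v_1+v_2=a$ and $(v_1^s+v_2^s)^{1/s}=b$, and $V^{[1,1]}_u=Q^{(1,1)}_{1,u}-Q^{(1,1)}_{1,0}$ for $u\in K^\times$. *)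

theory Defs
  imports "HOL-Number_Theory.Number_Theory" "HOL-Library.Cardinality"
begin

text \<open>K is the finite field 'a; p = CHAR('a), q = CARD('a) = p^n.\<close>

definition ext_degree :: "'a::{field,finite} itself \<Rightarrow> nat" where
  "ext_degree (T::'a itself) = (THE n. CARD('a) = CHAR('a) ^ n)"

text \<open>Absolute trace K \<rightarrow> F_p (values in the prime subfield of K).\<close>
definition abs_trace :: "'a::{field,finite} \<Rightarrow> 'a" where
  "abs_trace x = (\<Sum>j<ext_degree TYPE('a). x ^ (CHAR('a) ^ j))"

definition trace_rep :: "'a::{field,finite} \<Rightarrow> nat" where
  "trace_rep x = (THE m. m < CHAR('a) \<and> of_nat m = abs_trace x)"

definition psi :: "'a::{field,finite} \<Rightarrow> complex" where
  "psi x = exp (2 * pi * \<i> * of_nat (trace_rep x) / of_nat CHAR('a))"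

definition W :: "nat \<Rightarrow> 'a::{field,finite} \<Rightarrow> complex" where
  "W s u = (\<Sum>x\<in>UNIV. psi (x ^ s - u * x))"

text \<open>1/s: the inverse of s modulo q-1 (a positive representative).\<close>
definition sinv :: "'a::{field,finite} itself \<Rightarrow> nat \<Rightarrow> nat" where
  "sinv (T::'a itself) s = (SOME t. t > 0 \<and> [s * t = 1] (mod (CARD('a) - 1)))"

definition Q11 :: "nat \<Rightarrow> 'a::{field,finite} \<Rightarrow> 'a \<Rightarrow> nat" where
  "Q11 s a b = card {(v1, v2). (v1::'a) + v2 = a \<and> (v1 ^ s + v2 ^ s) ^ (sinv TYPE('a) s) = b}"

definition V11 :: "nat \<Rightarrow> 'a::{field,finite} \<Rightarrow> int" where
  "V11 s u = int (Q11 s 1 u) - int (Q11 s 1 (0::'a))"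

definition Omega :: "nat \<Rightarrow> nat \<Rightarrow> 'a::{field,finite} \<Rightarrow> 'a \<Rightarrow> complex" where
  "Omega s k lam u = (\<Sum>i<k. W s (lam ^ i * u))"

end

theory Submission
  imports Defs "HOL-Algebra.Sylow" "HOL-Analysis.Complex_Transcendental"
    "HOL-Computational_Algebra.Polynomial"
begin

(* The Weil sum is W_u = sum_x psi(x^s) psi(-u x), where psi is a nontrivial additive character:
   the trace is additive, takes values in F_p and is not identically zero. In a sum over u of a
   product of W's, orthogonality of psi reduces the u-sum to q times a sum over the solutions of a
   single linear equation. Since x |-> x^s permutes K, this gives sum_u W_u = q and
   sum_u W_(au) W_(bu) = q^2 [a = b], and the second moment of Omega only sees the diagonal
   because the lambda^i are distinct. For k = 2 we have lambda = -1, and the third moment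
   reduces to sum_u W_u^2 W_(cu) for c = 1 and c = -1. Substituting x = w v turns this into
   q^2 times the number of v with v^s + (1 - v)^s = c^(-s), which is Q_(1, 1/c). *)

section \<open>Finite fields\<close>

lemma two_le_card_finite_field: "2 \<le> CARD('a::{field,finite})"
proof -
  have "card {0::'a, 1} \<le> CARD('a)" by (rule card_mono) auto
  then show ?thesis by simp
qed

lemma prime_CHAR_finite_field: "prime CHAR('a::{field,finite})"
  by (intro prime_CHAR_semidom finite_imp_CHAR_pos) simp

lemma power_card_minus_one_eq_1:
  fixes x :: "'a::{field,finite}"
  assumes "x \<noteq> 0"
  shows "x ^ (CARD('a) - 1) = 1"
proof -
  let ?U = "UNIV - {0::'a}"
  have "(\<Prod>y\<in>?U. y) = (\<Prod>y\<in>?U. x * y)"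
    by (rule prod.reindex_bij_witness[of _ "\<lambda>y. x * y" "\<lambda>y. y / x"]) (use assms in auto)
  also have "\<dots> = x ^ (CARD('a) - 1) * (\<Prod>y\<in>?U. y)"
    by (simp add: prod.distrib card_Diff_singleton)
  finally show ?thesis
    by (simp add: prod_zero_iff)
qed

lemma power_eq_self_if_cong_1:
  fixes x :: "'a::{field,finite}"
  assumes "e > 0" and "[e = 1] (mod (CARD('a) - 1))"
  shows "x ^ e = x"
proof (cases "x = 0")
  case True
  then show ?thesis using assms(1) by simp
next
  case False
  obtain j where "e = j * (CARD('a) - 1) + 1"
    using assms cong_le_nat[of 1 e] by auto
  then have "x ^ e = (x ^ (CARD('a) - 1)) ^ j * x"
    by (simp add: power_mult[symmetric] mult.commute)
  then show ?thesis
    using power_card_minus_one_eq_1[OF False] by simp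
qed

lemma power_card_eq_self: "(x::'a::{field,finite}) ^ CARD('a) = x"
proof (rule power_eq_self_if_cong_1)
  have "[(CARD('a) - 1) + 1 = 0 + 1] (mod (CARD('a) - 1))"
    by (intro cong_add) (simp_all add: cong_def)
  then show "[CARD('a) = 1] (mod (CARD('a) - 1))"
    using two_le_card_finite_field[where 'a='a] by simp
qed simp

lemma prime_dvd_card_finite_field_imp_eq_CHAR:
  assumes "prime r" and "r dvd CARD('a::{field,finite})"
  shows "r = CHAR('a)"
proof -
  define G where "G = \<lparr>carrier = (UNIV :: 'a set), monoid.mult = (+), one = (0::'a)\<rparr>"
  interpret group G
  proof (rule groupI)
    fix x assume "x \<in> carrier G"
    show "\<exists>y\<in>carrier G. y \<otimes>\<^bsub>G\<^esub> x = \<one>\<^bsub>G\<^esub>"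
      by (intro bexI[of _ "-x"]) (auto simp: G_def)
  qed (auto simp: G_def add_ac)
  obtain m where "CARD('a) = r ^ 1 * m"
    using assms(2) by auto
  moreover have "group G" ..
  ultimately obtain H where H: "subgroup H G" "card H = r"
    using sylow_thm[OF assms(1), of G 1 m] by (auto simp: G_def Coset.order_def)
  have add_closed: "x + y \<in> H" if "x \<in> H" "y \<in> H" for x y
    using subgroup.m_closed[OF H(1) that] by (simp add: G_def)
  have "\<not> H \<subseteq> {0}"
  proof
    assume "H \<subseteq> {0}"
    then have "card H \<le> 1"
      using card_mono[of "{0}" H] by simp
    then show False
      using H(2) prime_ge_2_nat[OF assms(1)] by simp
  qed
  then obtain x where x: "x \<in> H" "x \<noteq> 0"
    by blast
  \<comment> \<open>translation by \<open>x\<close> permutes \<open>H\<close>, so \<open>r * x = 0\<close>\<close>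
  have "(\<lambda>y. x + y) ` H = H"
    by (rule endo_inj_surj) (use add_closed x in \<open>auto simp: inj_on_def\<close>)
  then have "(\<Sum>y\<in>H. y) = (\<Sum>y\<in>H. x + y)"
    using sum.reindex[of "\<lambda>y. x + y" H "\<lambda>y. y"] by (simp add: inj_on_def)
  also have "\<dots> = of_nat r * x + (\<Sum>y\<in>H. y)"
    by (simp add: sum.distrib H(2))
  finally have "of_nat r = (0::'a)"
    using x(2) by simp
  then have "CHAR('a) dvd r"
    by (simp add: of_nat_eq_0_iff_char_dvd)
  then show ?thesis
    using assms(1) prime_CHAR_finite_field[where 'a='a] primes_dvd_imp_eq by metis
qed

lemma card_finite_field_eq_CHAR_power:
  "CARD('a::{field,finite}) = CHAR('a) ^ ext_degree TYPE('a)"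
proof -
  let ?p = "CHAR('a)" and ?q = "CARD('a)"
  have "prime_factors ?q = {?p}"
  proof (intro equalityI subsetI)
    fix r assume "r \<in> prime_factors ?q"
    then show "r \<in> {?p}"
      using prime_dvd_card_finite_field_imp_eq_CHAR[where 'a='a] by (simp add: in_prime_factors_iff)
  next
    fix r assume "r \<in> {?p}"
    then show "r \<in> prime_factors ?q"
      using CHAR_dvd_CARD[where 'a='a] prime_CHAR_finite_field[where 'a='a]
      by (simp add: in_prime_factors_iff)
  qed
  then have q: "?q = ?p ^ multiplicity ?p ?q"
    using prod_prime_factors[of ?q] by simp
  have "ext_degree TYPE('a) = multiplicity ?p ?q"
    unfolding ext_degree_def
  proof (rule the_equality)
    fix n assume "?q = ?p ^ n"
    with q have "?p ^ n = ?p ^ multiplicity ?p ?q"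
      by simp
    then show "n = multiplicity ?p ?q"
      using prime_gt_1_nat[OF prime_CHAR_finite_field[where 'a='a]] by (simp add: power_inject_exp)
  qed (rule q)
  with q show ?thesis by simp
qed

lemma ext_degree_pos: "ext_degree TYPE('a::{field,finite}) > 0"
proof (rule ccontr)
  assume "\<not> ?thesis"
  then have "CARD('a) = 1"
    using card_finite_field_eq_CHAR_power[where 'a='a] by simp
  then show False
    using two_le_card_finite_field[where 'a='a] by simp
qed

lemma of_nat_power_CHAR:
  fixes m :: nat
  assumes "prime CHAR('a::comm_semiring_1)"
  shows "(of_nat m :: 'a) ^ CHAR('a) = of_nat m"
proof (induction m)
  case 0
  show ?case
    using prime_gt_0_nat[OF assms] by (simp add: power_0_left)
next
  case (Suc m)
  have "(of_nat (Suc m) :: 'a) ^ CHAR('a) = (of_nat m + 1) ^ CHAR('a)"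
    by (simp add: add.commute)
  also have "\<dots> = of_nat m ^ CHAR('a) + 1 ^ CHAR('a)"
    by (rule freshmans_dream[OF assms refl])
  finally show ?case
    using Suc by (simp add: add.commute)
qed

section \<open>The absolute trace and the character \<open>psi\<close>\<close>

text \<open>The prime field is the set of roots of \<open>X ^ p - X\<close>: it already supplies \<open>p\<close> of them.\<close>

lemma power_CHAR_eq_self_imp_of_nat:
  fixes y :: "'a::idom"
  assumes "prime CHAR('a)" and "y ^ CHAR('a) = y"
  shows "\<exists>m<CHAR('a). y = of_nat m"
proof (rule ccontr)
  assume not_of_nat: "\<not> ?thesis"
  define p where "p = CHAR('a)"
  have p2: "p \<ge> 2"
    unfolding p_def using assms(1) prime_ge_2_nat by blast
  define P :: "'a poly" where "P = monom 1 p - [:0, 1:]"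
  have poly_P: "poly P z = z ^ p - z" for z
    by (simp add: P_def poly_monom)
  have "coeff P p = 1"
    using p2 by (simp add: P_def coeff_pCons split: nat.split)
  then have "P \<noteq> 0"
    by auto
  have "degree P \<le> p"
    unfolding P_def
    by (rule degree_diff_le) (use p2 in \<open>auto intro: degree_monom_le simp: degree_pCons_eq_if\<close>)
  have roots: "insert y (of_nat ` {..<p}) \<subseteq> {z. poly P z = 0}"
    using assms of_nat_power_CHAR[OF assms(1)] by (auto simp: poly_P p_def)
  have "inj_on (of_nat :: nat \<Rightarrow> 'a) {..<p}"
    by (auto simp: inj_on_def of_nat_eq_iff_cong_CHAR cong_def p_def)
  then have "card (insert y (of_nat ` {..<p})) = Suc p"
    using not_of_nat by (subst card_insert_disjoint) (auto simp: card_image p_def)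
  moreover have "card (insert y (of_nat ` {..<p})) \<le> card {z. poly P z = 0}"
    using roots poly_roots_finite[OF \<open>P \<noteq> 0\<close>] by (rule card_mono[rotated])
  ultimately show False
    using card_poly_roots_bound[OF \<open>P \<noteq> 0\<close>] \<open>degree P \<le> p\<close> by simp
qed

lemma abs_trace_add: "abs_trace (x + y :: 'a::{field,finite}) = abs_trace x + abs_trace y"
  unfolding abs_trace_def
  by (simp add: sum.distrib freshmans_dream'[OF prime_CHAR_finite_field])

lemma abs_trace_power_CHAR: "abs_trace (x::'a::{field,finite}) ^ CHAR('a) = abs_trace x"
proof -
  define n where "n = ext_degree TYPE('a)"
  define f where "f j = x ^ (CHAR('a) ^ j)" for j
  have "abs_trace x ^ CHAR('a) = (\<Sum>j<n. f j ^ CHAR('a))"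
    unfolding abs_trace_def n_def f_def
    by (rule freshmans_dream_sum[OF prime_CHAR_finite_field refl])
  also have "\<dots> = (\<Sum>j<n. f (Suc j))"
    by (simp add: f_def power_mult[symmetric] mult.commute)
  also have "\<dots> = (\<Sum>j<n. f j)"
  proof -
    have "f n = f 0"
      using card_finite_field_eq_CHAR_power[where 'a='a] power_card_eq_self[of x]
      by (simp add: f_def n_def)
    then show ?thesis
      using sum.lessThan_Suc_shift[of f n] by (simp add: add.commute)
  qed
  finally show ?thesis
    unfolding abs_trace_def n_def f_def .
qed

text \<open>The trace is a polynomial of degree \<open>q / p < q\<close>, so it cannot vanish on all of \<open>K\<close>.\<close>

lemma ex_abs_trace_neq_0: "\<exists>x::'a::{field,finite}. abs_trace x \<noteq> 0"
proof (rule ccontr)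
  assume "\<not> ?thesis"
  then have trace_0: "abs_trace x = 0" for x :: 'a
    by blast
  define p where "p = CHAR('a)"
  define n where "n = ext_degree TYPE('a)"
  have p2: "p \<ge> 2"
    unfolding p_def using prime_CHAR_finite_field[where 'a='a] prime_ge_2_nat by blast
  have n_pos: "n > 0"
    unfolding n_def by (rule ext_degree_pos)
  define P :: "'a poly" where "P = (\<Sum>j<n. monom 1 (p ^ j))"
  have "coeff P (p ^ (n - 1)) = (\<Sum>j<n. if j = n - 1 then 1 else 0)"
    using p2 by (auto simp: P_def coeff_sum power_inject_exp intro!: sum.cong)
  also have "\<dots> = 1"
    using n_pos by simp
  finally have "P \<noteq> 0"
    by auto
  have "degree P \<le> p ^ (n - 1)"
    unfolding P_def
  proof (rule degree_sum_le)
    fix j assume "j \<in> {..<n}"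
    then have "p ^ j \<le> p ^ (n - 1)"
      using p2 by (intro power_increasing) auto
    then show "degree (monom (1::'a) (p ^ j)) \<le> p ^ (n - 1)"
      using degree_monom_le order_trans by blast
  qed simp
  moreover have "{z. poly P z = 0} = UNIV"
    using trace_0 by (simp add: P_def poly_sum poly_monom abs_trace_def p_def n_def)
  ultimately have "p ^ n \<le> p ^ (n - 1)"
    using card_poly_roots_bound[OF \<open>P \<noteq> 0\<close>] card_finite_field_eq_CHAR_power[where 'a='a]
    by (simp add: p_def n_def)
  moreover have "p ^ (n - 1) < p ^ n"
    using p2 n_pos by (intro power_strict_increasing) auto
  ultimately show False
    by simp
qed

lemma trace_rep_less_CHAR: "trace_rep (x::'a::{field,finite}) < CHAR('a)"
  and of_nat_trace_rep: "of_nat (trace_rep x) = abs_trace x"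
proof -
  obtain m where m: "m < CHAR('a)" "abs_trace x = of_nat m"
    using power_CHAR_eq_self_imp_of_nat[OF prime_CHAR_finite_field abs_trace_power_CHAR] by blast
  have "m' = m" if "m' < CHAR('a)" "of_nat m' = abs_trace x" for m'
    using that m by (simp add: of_nat_eq_iff_cong_CHAR cong_def)
  then have "\<exists>!m. m < CHAR('a) \<and> of_nat m = abs_trace x"
    using m by auto
  then have "trace_rep x < CHAR('a) \<and> of_nat (trace_rep x) = abs_trace x"
    unfolding trace_rep_def by (rule theI')
  then show "trace_rep x < CHAR('a)" "of_nat (trace_rep x) = abs_trace x"
    by simp_all
qed

lemma exp_2pi_i_div_cong:
  fixes m m' p :: nat
  assumes "[m = m'] (mod p)"
  shows "exp (2 * pi * \<i> * of_nat m / of_nat p) = exp (2 * pi * \<i> * of_nat m' / of_nat p)"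
proof -
  define e where "e n = exp (2 * pi * \<i> * of_nat n / of_nat p)" for n :: nat
  have "e n = e (n mod p)" for n
  proof (cases "p = 0")
    case False
    have "2 * pi * \<i> * of_nat n / of_nat p
        = 2 * pi * \<i> * of_nat (n mod p) / of_nat p + \<i> * (of_nat (n div p) * (of_real pi * 2))"
      using False by (subst div_mult_mod_eq[of n p, symmetric], simp only: of_nat_add of_nat_mult)
        (simp add: field_simps)
    then show ?thesis
      by (simp add: e_def exp_add)
  qed simp
  then have "e m = e m'"
    using assms unfolding cong_def by metis
  then show ?thesis
    by (simp add: e_def)
qed

lemma exp_2pi_i_div_neq_1:
  fixes m p :: nat
  assumes "0 < m" and "m < p"
  shows "exp (2 * pi * \<i> * of_nat m / of_nat p) \<noteq> 1"
proof
  assume "exp (2 * pi * \<i> * of_nat m / of_nat p) = 1"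
  then obtain n :: int where "2 * pi * real m / real p = of_int (2 * n) * pi"
    by (auto simp: exp_eq_1 Im_divide_of_nat)
  then have "real m = real_of_int n * real p"
    using assms by (simp add: field_simps)
  then have "of_int (int m) = (of_int (n * int p) :: real)"
    by simp
  then have "int p dvd int m"
    by (simp only: of_int_eq_iff) simp
  then have "p dvd m"
    by simp
  then show False
    using assms by (auto dest: dvd_imp_le)
qed

lemma psi_add: "psi (x + y :: 'a::{field,finite}) = psi x * psi y"
proof -
  have "(of_nat (trace_rep (x + y)) :: 'a) = of_nat (trace_rep x + trace_rep y)"
    by (simp add: of_nat_trace_rep abs_trace_add)
  then have "[trace_rep (x + y) = trace_rep x + trace_rep y] (mod CHAR('a))"
    by (rule of_nat_eq_iff_cong_CHAR[THEN iffD1])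
  then have "psi (x + y) = exp (2 * pi * \<i> * of_nat (trace_rep x + trace_rep y) / of_nat CHAR('a))"
    unfolding psi_def by (rule exp_2pi_i_div_cong)
  then show ?thesis
    by (simp add: psi_def exp_add[symmetric] add_divide_distrib distrib_left)
qed

lemma psi_0: "psi (0::'a::{field,finite}) = 1"
proof -
  have "psi (0::'a) = psi (0::'a) * psi (0::'a)"
    by (rule psi_add[of "0::'a" 0, unfolded add_0_right])
  moreover have "psi (0::'a) \<noteq> 0"
    by (simp add: psi_def)
  ultimately show ?thesis
    by (metis mult_cancel_left1)
qed

lemma psi_nontrivial: "\<exists>x::'a::{field,finite}. psi x \<noteq> 1"
proof -
  obtain x :: 'a where "abs_trace x \<noteq> 0"
    using ex_abs_trace_neq_0 by blast
  then have "0 < trace_rep x"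
    using of_nat_trace_rep[of x] by (intro gr0I) auto
  then have "psi x \<noteq> 1"
    unfolding psi_def by (rule exp_2pi_i_div_neq_1[OF _ trace_rep_less_CHAR])
  then show ?thesis ..
qed

lemma sum_additive_character_eq_0:
  fixes \<theta> :: "'a::{ab_group_add,finite} \<Rightarrow> 'b::idom"
  assumes hom: "\<And>x y. \<theta> (x + y) = \<theta> x * \<theta> y" and nontrivial: "\<theta> a \<noteq> 1"
  shows "(\<Sum>x\<in>UNIV. \<theta> x) = 0"
proof -
  have "(\<Sum>x\<in>UNIV. \<theta> x) = (\<Sum>x\<in>UNIV. \<theta> (a + x))"
    by (rule sum.reindex_bij_witness[of _ "\<lambda>y. a + y" "\<lambda>y. y - a"]) auto
  also have "\<dots> = \<theta> a * (\<Sum>x\<in>UNIV. \<theta> x)"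
    by (simp add: hom sum_distrib_left)
  finally have "(\<theta> a - 1) * (\<Sum>x\<in>UNIV. \<theta> x) = 0"
    by (simp add: algebra_simps)
  then show ?thesis
    using nontrivial by simp
qed

lemma sum_reindex_mult:
  fixes c :: "'a::{field,finite}"
  assumes "c \<noteq> 0"
  shows "(\<Sum>u\<in>UNIV. f (c * u)) = (\<Sum>u\<in>UNIV. f u)"
  by (rule sum.reindex_bij_witness[of _ "\<lambda>v. v / c" "\<lambda>u. c * u"]) (use assms in auto)

lemma sum_psi_mult:
  "(\<Sum>u\<in>UNIV. psi (u * (y::'a::{field,finite}))) = (if y = 0 then of_nat CARD('a) else 0)"
proof (cases "y = 0")
  case True
  then show ?thesis by (simp add: psi_0)
next
  case False
  have "(\<Sum>u\<in>UNIV. psi (u * y)) = (\<Sum>u\<in>UNIV. psi (u::'a))"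
    using sum_reindex_mult[OF False, of psi] by (simp add: mult.commute)
  also have "\<dots> = 0"
  proof -
    obtain a :: 'a where "psi a \<noteq> 1"
      using psi_nontrivial by blast
    then show ?thesis
      by (rule sum_additive_character_eq_0[OF psi_add])
  qed
  finally show ?thesis
    using False by simp
qed

lemma sum_psi_mult_collapse:
  fixes f :: "'b::finite \<Rightarrow> 'a::{field,finite} \<Rightarrow> complex" and g :: "'b \<Rightarrow> 'a \<Rightarrow> 'a"
  assumes "\<And>x z. g x z = 0 \<longleftrightarrow> z = h x"
  shows "(\<Sum>u\<in>UNIV. \<Sum>x\<in>UNIV. \<Sum>z\<in>UNIV. f x z * psi (u * g x z))
    = of_nat CARD('a) * (\<Sum>x\<in>UNIV. f x (h x))"
proof -
  have "(\<Sum>u\<in>UNIV. \<Sum>x\<in>UNIV. \<Sum>z\<in>UNIV. f x z * psi (u * g x z))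
      = (\<Sum>x\<in>UNIV. \<Sum>u\<in>UNIV. \<Sum>z\<in>UNIV. f x z * psi (u * g x z))"
    by (rule sum.swap)
  also have "\<dots> = (\<Sum>x\<in>UNIV. \<Sum>z\<in>UNIV. \<Sum>u\<in>UNIV. f x z * psi (u * g x z))"
    by (intro sum.cong refl sum.swap)
  also have "\<dots> = (\<Sum>x\<in>UNIV. \<Sum>z\<in>UNIV. if z = h x then of_nat CARD('a) * f x z else 0)"
    by (intro sum.cong refl) (simp add: sum_psi_mult assms flip: sum_distrib_left)
  finally show ?thesis
    by (simp add: sum_distrib_left)
qed

section \<open>Exponents coprime to \<open>q - 1\<close>\<close>

context
  fixes s :: nat
  assumes s_pos: "s > 0" and coprime_s: "coprime s (CARD('a::{field,finite}) - 1)"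
begin

lemma sinv_pos: "sinv TYPE('a) s > 0"
  and sinv_cong: "[s * sinv TYPE('a) s = 1] (mod (CARD('a) - 1))"
proof -
  define m where "m = CARD('a) - 1"
  obtain t where t: "[s * t = 1] (mod m)"
    using cong_solve_coprime_nat[OF coprime_s] by (auto simp: m_def)
  have "[s * (t + m) = s * t] (mod m)"
    by (simp add: distrib_left cong_def)
  then have "[s * (t + m) = 1] (mod m)"
    using t by (rule cong_trans)
  moreover have "t + m > 0"
    using two_le_card_finite_field[where 'a='a] by (simp add: m_def)
  ultimately have "\<exists>t. t > 0 \<and> [s * t = 1] (mod m)"
    by blast
  then have "sinv TYPE('a) s > 0 \<and> [s * sinv TYPE('a) s = 1] (mod m)"
    unfolding sinv_def m_def by (rule someI_ex)
  then show "sinv TYPE('a) s > 0" "[s * sinv TYPE('a) s = 1] (mod (CARD('a) - 1))"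
    by (simp_all add: m_def)
qed

lemma power_sinv_power: "((x::'a) ^ s) ^ sinv TYPE('a) s = x"
  using s_pos sinv_pos sinv_cong by (simp add: power_eq_self_if_cong_1 flip: power_mult)

lemma power_power_sinv: "((x::'a) ^ sinv TYPE('a) s) ^ s = x"
  using s_pos sinv_pos sinv_cong by (simp add: power_eq_self_if_cong_1 mult.commute flip: power_mult)

lemma power_s_eq_iff: "(x::'a) ^ s = y ^ s \<longleftrightarrow> x = y"
  by (metis power_sinv_power)

lemma sum_reindex_power_s: "(\<Sum>x\<in>UNIV. f ((x::'a) ^ s)) = (\<Sum>x\<in>UNIV. f x)"
  by (rule sum.reindex_bij_witness[of _ "\<lambda>y. y ^ sinv TYPE('a) s" "\<lambda>x. x ^ s"])
    (auto simp: power_sinv_power power_power_sinv)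

text \<open>If \<open>s\<close> is even then \<open>q - 1\<close> is odd, so \<open>K\<close> has characteristic 2.\<close>

lemma minus_power_s: "(- (x::'a)) ^ s = - (x ^ s)"
proof (cases "odd s")
  case False
  then have "odd (CARD('a) - 1)"
    using coprime_s by auto
  then have "2 dvd CARD('a)"
    using two_le_card_finite_field[where 'a='a] by (simp add: even_diff_nat)
  then have "CHAR('a) = 2"
    by (simp add: prime_dvd_card_finite_field_imp_eq_CHAR[symmetric])
  then show ?thesis
    by (simp add: uminus_CHAR_2)
qed simp

lemma sum_psi_mult_power_s:
  "(\<Sum>x\<in>UNIV. psi (c * (x::'a) ^ s)) = (if c = 0 then of_nat CARD('a) else 0)"
  using sum_reindex_power_s[of "\<lambda>y. psi (y * c)"] by (simp add: mult.commute sum_psi_mult)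

subsection \<open>Moments of Weil sums\<close>

lemma W_0: "W s (0::'a) = 0"
  using sum_psi_mult_power_s[of 1] by (simp add: W_def)

lemma W_eq_sum: "W s u = (\<Sum>x\<in>UNIV. psi ((x::'a) ^ s) * psi (u * - x))"
  unfolding W_def by (simp flip: psi_add)

lemma sum_W: "(\<Sum>u\<in>UNIV. W s (u::'a)) = of_nat CARD('a)"
proof -
  have "(\<Sum>u\<in>UNIV. W s (u::'a)) = (\<Sum>x\<in>UNIV. psi ((x::'a) ^ s) * (\<Sum>u\<in>UNIV. psi (u * - x)))"
    unfolding W_eq_sum by (subst sum.swap) (simp add: sum_distrib_left)
  also have "\<dots> = (\<Sum>x\<in>UNIV. if x = (0::'a) then of_nat CARD('a) else 0)"
    using s_pos
    by (intro sum.cong refl) (simp only: sum_psi_mult neg_equal_0_iff_equal, simp add: psi_0 power_0_left)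
  finally show ?thesis
    by simp
qed

lemma sum_W_mult_W:
  assumes "(a::'a) \<noteq> 0" and "b \<noteq> 0"
  shows "(\<Sum>u\<in>UNIV. W s (a * u) * W s (b * u)) = (if a = b then of_nat CARD('a) ^ 2 else 0)"
proof -
  have expand: "psi (x ^ s - a * u * x) * psi (y ^ s - b * u * y)
      = psi (x ^ s) * psi (y ^ s) * psi (u * - (a * x + b * y))" for x y u :: 'a
    by (simp only: psi_add[symmetric]) (rule arg_cong[where f = psi], simp add: algebra_simps)
  have power: "psi (x ^ s) * psi ((- (a * x) / b) ^ s) = psi ((1 - (a / b) ^ s) * x ^ s)" for x
  proof -
    have "(- (a * x) / b) ^ s = - ((a / b) ^ s * x ^ s)"
      by (simp add: minus_power_s power_mult_distrib flip: times_divide_eq_left)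
    then show ?thesis
      by (simp add: algebra_simps flip: psi_add)
  qed
  have "(\<Sum>u\<in>UNIV. W s (a * u) * W s (b * u))
      = (\<Sum>u\<in>UNIV. \<Sum>x\<in>UNIV. \<Sum>y\<in>UNIV. psi (x ^ s) * psi (y ^ s) * psi (u * - (a * x + b * y)))"
    unfolding W_def sum_product by (simp only: expand)
  also have "\<dots> = of_nat CARD('a) * (\<Sum>x\<in>UNIV. psi (x ^ s) * psi ((- (a * x) / b) ^ s))"
    by (rule sum_psi_mult_collapse)
      (use assms(2) in \<open>auto simp: field_simps neg_eq_iff_add_eq_0 eq_neg_iff_add_eq_0 add.commute\<close>)
  also have "\<dots> = of_nat CARD('a) * (if (a / b) ^ s = 1 then of_nat CARD('a) else 0)"
    by (simp only: power sum_psi_mult_power_s right_minus_eq eq_commute[of 1])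
  also have "(a / b) ^ s = 1 \<longleftrightarrow> a = b"
    using power_s_eq_iff[of "a / b" 1] assms(2) by simp
  finally show ?thesis
    by (simp add: power2_eq_square)
qed

lemma Q11_1_eq_card: "Q11 s 1 b = card {v::'a. v ^ s + (1 - v) ^ s = b ^ s}"
proof -
  have "{(v1, v2). (v1::'a) + v2 = 1 \<and> (v1 ^ s + v2 ^ s) ^ sinv TYPE('a) s = b}
      = (\<lambda>v. (v, 1 - v)) ` {v::'a. v ^ s + (1 - v) ^ s = b ^ s}"
    by (auto simp: image_iff power_sinv_power dest: arg_cong[where f = "\<lambda>z. z ^ s"])
      (metis power_power_sinv add_diff_cancel_left')+
  moreover have "inj (\<lambda>v::'a. (v, 1 - v))"
    by (auto intro: injI)
  ultimately show ?thesis
    unfolding Q11_def by (simp add: card_image inj_on_subset[OF _ subset_UNIV])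
qed

lemma Q11_1_0: "Q11 s (1::'a) 0 = 0"
proof -
  have "v ^ s + (1 - v) ^ s \<noteq> 0 ^ s" for v :: 'a
  proof
    assume "v ^ s + (1 - v) ^ s = 0 ^ s"
    then have "(1 - v) ^ s = (- v) ^ s"
      using s_pos by (simp add: minus_power_s add_eq_0_iff2 eq_neg_iff_add_eq_0 add.commute)
    then show False
      by (simp add: power_s_eq_iff)
  qed
  then show ?thesis
    by (simp add: Q11_1_eq_card)
qed

lemma W_squared_eq:
  "W s u ^ 2 = (\<Sum>w\<in>UNIV. (\<Sum>x\<in>UNIV. psi (x ^ s + (w - x) ^ s)) * psi (u * - (w::'a)))"
proof -
  have "W s u ^ 2 = (\<Sum>x\<in>UNIV. \<Sum>y\<in>UNIV. psi (x ^ s + y ^ s) * psi (u * - (x + y)))"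
    unfolding power2_eq_square W_def sum_product
    by (intro sum.cong refl) (simp add: algebra_simps flip: psi_add)
  also have "\<dots> = (\<Sum>x\<in>UNIV. \<Sum>w\<in>UNIV. psi (x ^ s + (w - x) ^ s) * psi (u * - w))"
  proof (rule sum.cong[OF refl])
    fix x :: 'a
    show "(\<Sum>y\<in>UNIV. psi (x ^ s + y ^ s) * psi (u * - (x + y)))
        = (\<Sum>w\<in>UNIV. psi (x ^ s + (w - x) ^ s) * psi (u * - w))"
      by (rule sum.reindex_bij_witness[of _ "\<lambda>w. w - x" "\<lambda>y. x + y"]) auto
  qed
  finally show ?thesis
    by (subst (asm) sum.swap) (simp add: sum_distrib_right)
qed

text \<open>Substituting \<open>x = w v\<close> for \<open>w \<noteq> 0\<close> makes the phase \<open>w ^ s\<close> times a polynomial in \<open>v\<close>,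
  whose zeros are counted by \<open>Q11\<close>.\<close>

lemma character_sum_eq_Q11:
  "(\<Sum>w\<in>UNIV. \<Sum>x\<in>UNIV. psi (x ^ s + (w - x) ^ s - b ^ s * w ^ s))
    = of_nat CARD('a) * of_nat (Q11 s 1 (b::'a))"
proof -
  define q :: complex where "q = of_nat CARD('a)"
  define C where "C v = v ^ s + (1 - v) ^ s - b ^ s" for v :: 'a
  define G where "G w x = psi (x ^ s + (w - x) ^ s - b ^ s * w ^ s)" for w x :: 'a
  have zero_sum: "(\<Sum>x\<in>UNIV. G 0 x) = q"
    using s_pos by (simp add: G_def minus_power_s psi_0 power_0_left q_def)
  have substitute: "(\<Sum>x\<in>UNIV. G w x) = (\<Sum>v\<in>UNIV. psi (C v * w ^ s))" if "w \<noteq> 0" for w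
  proof -
    have "G w (w * v) = psi (C v * w ^ s)" for v
    proof -
      have "(w - w * v) ^ s = w ^ s * (1 - v) ^ s"
        by (simp add: right_diff_distrib' flip: power_mult_distrib)
      then show ?thesis
        by (simp add: G_def C_def power_mult_distrib algebra_simps)
    qed
    then show ?thesis
      using sum_reindex_mult[OF that, of "G w"] by simp
  qed
  have nonzero_sum: "(\<Sum>w\<in>UNIV - {0}. psi (c * w ^ s)) = (if c = 0 then q else 0) - 1" for c :: 'a
    using s_pos by (simp add: sum_diff1 sum_psi_mult_power_s psi_0 power_0_left q_def)
  have "(\<Sum>w\<in>UNIV - {0}. \<Sum>x\<in>UNIV. G w x) = (\<Sum>w\<in>UNIV - {0}. \<Sum>v\<in>UNIV. psi (C v * w ^ s))"
    by (rule sum.cong) (simp_all add: substitute)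
  also have "\<dots> = (\<Sum>v\<in>UNIV. \<Sum>w\<in>UNIV - {0}. psi (C v * w ^ s))"
    by (rule sum.swap)
  also have "\<dots> = (\<Sum>v\<in>UNIV. (if C v = 0 then q else 0) - 1)"
    by (simp only: nonzero_sum)
  also have "\<dots> = q * of_nat (card {v. C v = 0}) - q"
    by (simp add: sum_subtractf sum.If_cases q_def)
  finally have "(\<Sum>w\<in>UNIV. \<Sum>x\<in>UNIV. G w x) = q * of_nat (card {v. C v = 0})"
    using sum.remove[of UNIV 0 "\<lambda>w. \<Sum>x\<in>UNIV. G w x"] zero_sum by simp
  also have "{v. C v = 0} = {v. v ^ s + (1 - v) ^ s = b ^ s}"
    by (simp add: C_def)
  finally show ?thesis
    by (simp add: G_def q_def Q11_1_eq_card)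
qed

lemma sum_W_squared_mult_W:
  assumes "(c::'a) \<noteq> 0"
  shows "(\<Sum>u\<in>UNIV. W s u ^ 2 * W s (c * u))
    = of_nat CARD('a) ^ 2 * of_nat (Q11 s 1 (inverse c))"
proof -
  define S where "S w = (\<Sum>x\<in>UNIV. psi (x ^ s + (w - x) ^ s))" for w :: 'a
  have expand: "S w * psi (u * - w) * psi (z ^ s - c * u * z)
      = S w * psi (z ^ s) * psi (u * - (w + c * z))" for u w z :: 'a
    by (simp add: mult.assoc algebra_simps flip: psi_add)
  have power: "S w * psi ((- w / c) ^ s)
      = (\<Sum>x\<in>UNIV. psi (x ^ s + (w - x) ^ s - inverse c ^ s * w ^ s))" for w
  proof -
    have "(- w / c) ^ s = - (inverse c ^ s * w ^ s)"
      by (simp add: minus_power_s divide_inverse mult.commute flip: power_mult_distrib)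
    then show ?thesis
      unfolding S_def sum_distrib_right by (simp flip: psi_add)
  qed
  have "(\<Sum>u\<in>UNIV. W s u ^ 2 * W s (c * u))
      = (\<Sum>u\<in>UNIV. \<Sum>w\<in>UNIV. \<Sum>z\<in>UNIV. S w * psi (z ^ s) * psi (u * - (w + c * z)))"
    unfolding W_squared_eq unfolding W_def sum_product S_def[symmetric] by (simp only: expand)
  also have "\<dots> = of_nat CARD('a) * (\<Sum>w\<in>UNIV. S w * psi ((- w / c) ^ s))"
    by (rule sum_psi_mult_collapse)
      (use assms in \<open>auto simp: field_simps neg_eq_iff_add_eq_0 eq_neg_iff_add_eq_0 add.commute\<close>)
  also have "\<dots> = of_nat CARD('a) ^ 2 * of_nat (Q11 s 1 (inverse c))"
    by (simp only: power character_sum_eq_Q11 power2_eq_square mult.assoc)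
  finally show ?thesis .
qed

subsection \<open>Moments of \<open>Omega\<close>\<close>

lemma Omega_0: "Omega s k lam (0::'a) = 0"
  by (simp add: Omega_def W_0)

lemma sum_Omega:
  assumes "(lam::'a) \<noteq> 0"
  shows "(\<Sum>u\<in>UNIV. Omega s k lam u) = of_nat (k * CARD('a))"
proof -
  have "(\<Sum>u\<in>UNIV. Omega s k lam u) = (\<Sum>i<k. \<Sum>u\<in>UNIV. W s (lam ^ i * u))"
    unfolding Omega_def by (rule sum.swap)
  also have "\<dots> = (\<Sum>i<k. of_nat CARD('a))"
    using assms by (simp add: sum_reindex_mult sum_W)
  finally show ?thesis
    by simp
qed

lemma sum_Omega_squared:
  assumes "(lam::'a) \<noteq> 0" and "inj_on (\<lambda>i. lam ^ i) {..<k}"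
  shows "(\<Sum>u\<in>UNIV. Omega s k lam u ^ 2) = of_nat (k * CARD('a) ^ 2)"
proof -
  have "(\<Sum>u\<in>UNIV. Omega s k lam u ^ 2)
      = (\<Sum>i<k. \<Sum>u\<in>UNIV. \<Sum>j<k. W s (lam ^ i * u) * W s (lam ^ j * u))"
    unfolding Omega_def power2_eq_square sum_product by (rule sum.swap)
  also have "\<dots> = (\<Sum>i<k. \<Sum>j<k. \<Sum>u\<in>UNIV. W s (lam ^ i * u) * W s (lam ^ j * u))"
    by (intro sum.cong[OF refl] sum.swap)
  also have "\<dots> = (\<Sum>i<k. \<Sum>j<k. if i = j then of_nat CARD('a) ^ 2 else 0)"
    using assms by (intro sum.cong refl) (simp add: sum_W_mult_W inj_on_eq_iff)
  finally show ?thesis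
    by simp
qed

lemma sum_Omega_cubed_2:
  "(\<Sum>u\<in>UNIV. Omega s 2 (-1) (u::'a) ^ 3)
    = 2 * of_nat CARD('a) ^ 2 * (of_nat (Q11 s 1 (1::'a)) + 3 * of_nat (Q11 s 1 (-1::'a)))"
proof -
  have reflect: "(\<Sum>u\<in>UNIV. f (- u)) = (\<Sum>u\<in>UNIV. f (u::'a))" for f :: "'a \<Rightarrow> complex"
    using sum_reindex_mult[of "-1" f] by simp
  have cube: "Omega s 2 (-1) u ^ 3
      = W s u ^ 3 + 3 * (W s u ^ 2 * W s (- u)) + 3 * (W s (- u) ^ 2 * W s u) + W s (- u) ^ 3" for u
    by (simp add: Omega_def numeral_2_eq_2 power3_eq_cube power2_eq_square algebra_simps)
  have "(\<Sum>u\<in>UNIV. W s (- u) ^ 2 * W s (u::'a)) = (\<Sum>u\<in>UNIV. W s u ^ 2 * W s (- (u::'a)))"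
    using reflect[of "\<lambda>u. W s u ^ 2 * W s (- u)"] by simp
  moreover have "(\<Sum>u\<in>UNIV. W s (- (u::'a)) ^ 3) = (\<Sum>u\<in>UNIV. W s (u::'a) ^ 3)"
    by (rule reflect)
  moreover have "(\<Sum>u\<in>UNIV. W s (u::'a) ^ 3) = of_nat CARD('a) ^ 2 * of_nat (Q11 s 1 (1::'a))"
    using sum_W_squared_mult_W[of 1] by (simp add: power3_eq_cube power2_eq_square)
  moreover have "(\<Sum>u\<in>UNIV. W s u ^ 2 * W s (- (u::'a)))
      = of_nat CARD('a) ^ 2 * of_nat (Q11 s 1 (-1::'a))"
    using sum_W_squared_mult_W[of "-1"] by simp
  ultimately show ?thesis
    unfolding cube by (simp add: sum.distrib flip: sum_distrib_left) (simp add: algebra_simps)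
qed

end

lemma inj_on_power_lessThan:
  fixes x :: "'a::idom"
  assumes "x \<noteq> 0" and "\<forall>i. 0 < i \<and> i < k \<longrightarrow> x ^ i \<noteq> 1"
  shows "inj_on (\<lambda>i. x ^ i) {..<k}"
proof -
  have "x ^ a \<noteq> x ^ b" if "a < b" "b < k" for a b
  proof
    assume "x ^ a = x ^ b"
    moreover have "x ^ a * x ^ (b - a) = x ^ b"
      using \<open>a < b\<close> by (simp flip: power_add)
    ultimately have "x ^ a * x ^ (b - a) = x ^ a * 1"
      by simp
    then have "x ^ (b - a) = 1"
      using assms(1) by simp
    then show False
      using assms(2) that by auto
  qed
  then show ?thesis
    by (intro inj_onI) (metis lessThan_iff linorder_neqE_nat)
qed

theorem lemma5p17:
  fixes s k :: nat and lam :: "'a::{field,finite}"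
  assumes "s > 0" and "coprime s (CARD('a) - 1)"
    and "k > 0" and "[CHAR('a) = 1] (mod k)"
    and "lam \<in> range of_nat" and "lam ^ k = 1" and "\<forall>i. 0 < i \<and> i < k \<longrightarrow> lam ^ i \<noteq> 1"
  shows "(\<Sum>u\<in>UNIV - {0}. (Omega s k lam u) ^ 0) = of_nat (CARD('a) - 1)
    \<and> (\<Sum>u\<in>UNIV - {0}. Omega s k lam u) = of_nat (k * CARD('a))
    \<and> (\<Sum>u\<in>UNIV - {0}. (Omega s k lam u) ^ 2) = of_nat (k * CARD('a) ^ 2)
    \<and> (k = 2 \<longrightarrow> (\<Sum>u\<in>UNIV - {0}. (Omega s k lam u) ^ 3)
           = 2 * of_nat (CARD('a) ^ 2) * (of_int (V11 s (1::'a)) + 3 * of_int (V11 s (-1::'a))))"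
proof -
  note s = assms(1,2)
  have "lam \<noteq> 0"
    using assms(3,6) by (auto simp: power_0_left)
  have drop_0: "(\<Sum>u\<in>UNIV - {0}. Omega s k lam u ^ m) = (\<Sum>u\<in>UNIV. Omega s k lam u ^ m)"
    if "m > 0" for m
    using that by (intro sum.mono_neutral_left) (auto simp: Omega_0[OF s])
  have "lam = -1" if "k = 2"
    using assms(6,7) that by (auto simp: power2_eq_1_iff)
  moreover have "V11 s (b::'a) = int (Q11 s 1 b)" for b
    by (simp add: V11_def Q11_1_0[OF s])
  ultimately show ?thesis
    using drop_0[of 1] drop_0[of 2] drop_0[of 3] sum_Omega[OF s \<open>lam \<noteq> 0\<close>]
      sum_Omega_squared[OF s \<open>lam \<noteq> 0\<close> inj_on_power_lessThan[OF \<open>lam \<noteq> 0\<close> assms(7)]]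
      sum_Omega_cubed_2[OF s]
    by auto
qed

end
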